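(* Let $A$ be a unital $C^*$-algebra and let $a,b\in A$ be unitary. Then $a=b$ if and only if $\rho(a,b)=0$.
   Context: For $a,b\in A$ and $n\geq 0$ put $C_{a,b}^n\mathbf 1=\sum_{k=0}^n(-1)^k\binom{n}{k}a^{n-k}b^k$ (with $a^0=b^0=\mathbf 1$), and $\rho(a,b)=\limsup_{n\to\infty}\|C_{a,b}^n\mathbf 1\|^{1/n}$. *)

theory Defs
  imports "HOL-Analysis.Analysis" "HOL-Library.Liminf_Limsup"
begin

text \<open>The library has no complex vector spaces other than
  via scalar multiplication by reals, so complex scalar multiplication and the involution
  are added as class parameters together with the C*-algebra axioms.\<close>

class cstar_algebra = real_normed_algebra_1 + banach +
  fixes scaleC :: "complex \<Rightarrow> 'a \<Rightarrow> 'a"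
    and invol :: "'a \<Rightarrow> 'a"
  assumes scaleC_of_real: "scaleC (complex_of_real r) x = scaleR r x"
    and scaleC_add_left: "scaleC (c + d) x = scaleC c x + scaleC d x"
    and scaleC_add_right: "scaleC c (x + y) = scaleC c x + scaleC c y"
    and scaleC_mult: "scaleC (c * d) x = scaleC c (scaleC d x)"
    and scaleC_one: "scaleC 1 x = x"
    and norm_scaleC: "norm (scaleC c x) = cmod c * norm x"
    and scaleC_mult_left: "scaleC c (x * y) = scaleC c x * y"
    and scaleC_mult_right: "scaleC c (x * y) = x * scaleC c y"
    and invol_invol: "invol (invol x) = x"
    and invol_add: "invol (x + y) = invol x + invol y"
    and invol_scaleC: "invol (scaleC c x) = scaleC (cnj c) (invol x)"
    and invol_mult: "invol (x * y) = invol y * invol x"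
    and cstar_identity: "norm (invol x * x) = (norm x)\<^sup>2"

definition unitary :: "'a::cstar_algebra \<Rightarrow> bool" where
  "unitary u \<longleftrightarrow> invol u * u = 1 \<and> u * invol u = 1"

definition Cab :: "'a::cstar_algebra \<Rightarrow> 'a \<Rightarrow> nat \<Rightarrow> 'a" where
  "Cab a b n = (\<Sum>k\<le>n. ((-1) ^ k * of_nat (n choose k)) * a ^ (n - k) * b ^ k)"

definition rho :: "'a::cstar_algebra \<Rightarrow> 'a \<Rightarrow> ereal" where
  "rho a b = limsup (\<lambda>n. ereal (root n (norm (Cab a b n))))"

end

theory Submission
  imports Defs
begin

text \<open>For unitary \<open>a\<close>, \<open>b\<close> the map \<open>T y = a y b\<^sup>*\<close> is a complex-linear isometry and
  \<open>(T - I)\<^sup>n 1 = C\<^sup>n\<^sub>a\<^sub>,\<^sub>b 1 \<cdot> (b\<^sup>*)\<^sup>n\<close>. If \<open>\<rho>(a,b) = 0\<close>, the generating function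
  \<open>\<Phi>(s) = \<Sum>\<^sub>n s\<^sup>n (T - I)\<^sup>n 1\<close> is entire and satisfies \<open>(1 + s) \<Phi>(s) - s T(\<Phi>(s)) = 1\<close>; since \<open>T\<close>
  is isometric this gives \<open>|1 + 2 Re s| \<parallel>\<Phi>(s)\<parallel> \<le> |1 + s| + |s|\<close>. Averaging \<open>(1 + s + s\<^sup>*) \<Phi>(s)\<close> over
  the \<open>M\<close>-th roots of unity on the circle \<open>|s| = R\<close> extracts the coefficients of index 0 and 1,
  up to a tail that is small for large \<open>M\<close>; hence \<open>\<parallel>1 + R\<^sup>2 (T 1 - 1)\<parallel> = O(R)\<close>, which forces
  \<open>T 1 = 1\<close>, i.e. \<open>a b\<^sup>* = 1\<close>.\<close>

lemma scaleC_zero_left [simp]: "scaleC 0 (x::'a::cstar_algebra) = 0"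
  using scaleC_of_real[of 0 x] by simp

lemma scaleC_scaleR: "scaleC c (r *\<^sub>R (x::'a::cstar_algebra)) = r *\<^sub>R scaleC c x"
  by (metis mult.commute scaleC_mult scaleC_of_real)

lemma bounded_linear_scaleC: "bounded_linear (scaleC c :: 'a::cstar_algebra \<Rightarrow> 'a)"
  by (rule bounded_linear_intro[where K="cmod c"])
     (simp_all add: scaleC_add_right scaleC_scaleR norm_scaleC)

lemma scaleC_sum_left: "scaleC (\<Sum>i\<in>I. f i) (x::'a::cstar_algebra) = (\<Sum>i\<in>I. scaleC (f i) x)"
  by (induction I rule: infinite_finite_induct) (auto simp: scaleC_add_left)

lemma scaleC_suminf:
  "summable f \<Longrightarrow> scaleC c (suminf f) = (\<Sum>n. scaleC c (f n :: 'a::cstar_algebra))"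
  using bounded_linear.suminf[OF bounded_linear_scaleC] by metis

lemma cmod_one_plus_cnj:
  "cmod (1 + s + cnj s) = (cmod (1 + s) + cmod s) * \<bar>cmod (1 + s) - cmod s\<bar>"
proof -
  have "1 + s + cnj s = complex_of_real (1 + 2 * Re s)"
    by (simp add: complex_eq_iff)
  hence "cmod (1 + s + cnj s) = \<bar>1 + 2 * Re s\<bar>"
    by (simp only: norm_of_real)
  also have "1 + 2 * Re s = (cmod (1 + s))\<^sup>2 - (cmod s)\<^sup>2"
    unfolding cmod_power2 by (simp add: power2_eq_square algebra_simps)
  also have "\<dots> = (cmod (1 + s) + cmod s) * (cmod (1 + s) - cmod s)"
    by (simp add: power2_eq_square algebra_simps)
  finally show ?thesis by (simp add: abs_mult)
qed

lemma norm_sum_circle_le: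
  fixes R :: real
  assumes "\<And>j. j \<in> J \<Longrightarrow> cmod (s j) = R"
  shows "cmod (\<Sum>j\<in>J. (1 + s j + cnj (s j)) * s j ^ n) \<le> card J * ((1 + 2 * R) * R ^ n)"
proof -
  have "cmod ((1 + s j + cnj (s j)) * s j ^ n) \<le> (1 + 2 * R) * R ^ n" if "j \<in> J" for j
  proof -
    have R: "0 \<le> R" using assms[OF that] by (metis norm_ge_zero)
    have "cmod (1 + s j + cnj (s j)) \<le> 1 + 2 * R"
      using norm_triangle_ineq[of "1 + s j" "cnj (s j)"] norm_triangle_ineq[of 1 "s j"] assms[OF that]
      by simp
    thus ?thesis
      unfolding norm_mult norm_power assms[OF that] by (rule mult_right_mono) (simp add: R)
  qed
  hence "(\<Sum>j\<in>J. cmod ((1 + s j + cnj (s j)) * s j ^ n)) \<le> card J * ((1 + 2 * R) * R ^ n)"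
    by (rule sum_bounded_above)
  thus ?thesis by (rule order_trans[OF norm_sum])
qed

definition unity_root :: "nat \<Rightarrow> complex" where
  "unity_root M = exp (2 * of_real pi * \<i> / of_nat M)"

lemma unity_root_power_eq_1_iff: "0 < M \<Longrightarrow> unity_root M ^ q = 1 \<longleftrightarrow> M dvd q"
proof -
  assume "0 < M"
  have "unity_root M ^ q = exp (2 * of_real pi * \<i> * of_nat q / of_nat M)"
    unfolding unity_root_def exp_of_nat_mult[symmetric] by (simp add: field_simps)
  thus ?thesis using \<open>0 < M\<close> complex_root_unity_eq_1[of M q] by simp
qed

lemma norm_unity_root [simp]: "cmod (unity_root M) = 1"
  by (simp add: unity_root_def norm_exp_eq_Re)

lemma sum_unity_root_power:
  assumes "0 < M"
  shows "(\<Sum>j<M. unity_root M ^ (j * q)) = (if M dvd q then of_nat M else 0)"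
proof -
  define w where "w = unity_root M ^ q"
  have pw: "unity_root M ^ (j * q) = w ^ j" for j
    by (simp add: w_def power_mult[symmetric] mult.commute)
  have "w ^ M = 1"
    using unity_root_power_eq_1_iff[OF assms, of "q * M"] by (simp add: w_def power_mult[symmetric])
  moreover have "w = 1 \<longleftrightarrow> M dvd q"
    unfolding w_def by (rule unity_root_power_eq_1_iff[OF assms])
  ultimately show ?thesis
    by (cases "w = 1") (simp_all add: pw geometric_sum)
qed

lemma cnj_unity_root_power:
  assumes "0 < M"
  shows "cnj (unity_root M ^ j) = unity_root M ^ (j * (M - 1))"
proof -
  define z where "z = unity_root M ^ j"
  have "z * cnj z = 1"
    using complex_norm_square[of z] by (simp add: z_def norm_power)
  moreover have "z * z ^ (M - 1) = 1"
  proof -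
    have "z * z ^ (M - 1) = z ^ M" using assms by (cases M) simp_all
    also have "\<dots> = 1"
      using unity_root_power_eq_1_iff[OF assms, of "j * M"] by (simp add: z_def power_mult)
    finally show ?thesis .
  qed
  ultimately have "cnj z = z ^ (M - 1)"
    by (metis mult.assoc mult.commute mult_1_left)
  thus ?thesis by (simp add: z_def power_mult)
qed

text \<open>With \<open>s = R w^j\<close> the term \<open>(1 + s + s\<^sup>*) s^n\<close> involves the powers \<open>w^(jn)\<close>,
  \<open>w^(j(n+1))\<close> and \<open>w^(j(n-1))\<close>; summing over \<open>j < M\<close> kills every power of \<open>w\<close> not divisible
  by \<open>M\<close>.\<close>

lemma root_average_coeff:
  fixes R :: real
  assumes k: "2 \<le> k" and M: "M = k + 1" and n: "n < k"
  defines "s j \<equiv> of_real R * unity_root M ^ j"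
  shows "(\<Sum>j<M. (1 + s j + cnj (s j)) * s j ^ n)
    = (if n = 0 then of_nat M else if n = 1 then of_nat M * of_real (R\<^sup>2) else 0)"
proof -
  define w where "w = unity_root M"
  define S where "S q = (\<Sum>j<M. w ^ (j * q))" for q
  have S: "S q = (if M dvd q then of_nat M else 0)" for q
    unfolding S_def w_def using M by (intro sum_unity_root_power) simp
  have "(1 + s j + cnj (s j)) * s j ^ n
      = of_real R ^ n * w ^ (j * n) + of_real R ^ n * of_real R * w ^ (j * (n + 1))
        + of_real R ^ n * of_real R * w ^ (j * (n + k))"
    for j
    using cnj_unity_root_power[of M j] M
    by (simp add: s_def w_def algebra_simps power_add[symmetric] flip: power_mult)
  hence "(\<Sum>j<M. (1 + s j + cnj (s j)) * s j ^ n)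
      = of_real R ^ n * S n + of_real R ^ n * of_real R * S (n + 1) + of_real R ^ n * of_real R * S (n + k)"
    by (simp add: S_def sum_distrib_left sum.distrib)
  moreover have "M dvd n \<longleftrightarrow> n = 0" "\<not> M dvd (n + 1)" "M dvd (n + k) \<longleftrightarrow> n = 1"
  proof -
    show "M dvd n \<longleftrightarrow> n = 0" using n M by (auto dest: dvd_imp_le)
    show "\<not> M dvd (n + 1)" using n M by (auto dest: dvd_imp_le)
    show "M dvd (n + k) \<longleftrightarrow> n = 1"
    proof (cases n)
      case 0 thus ?thesis using k M by (auto dest: dvd_imp_le)
    next
      case (Suc m)
      hence "n + k = M + m" using M by simp
      hence "M dvd (n + k) \<longleftrightarrow> M dvd m" by simp
      also have "\<dots> \<longleftrightarrow> m = 0" using n Suc M by (auto dest: dvd_imp_le)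
      finally show ?thesis using Suc by simp
    qed
  qed
  ultimately show ?thesis
    by (simp add: S power2_eq_square)
qed

locale complex_isometry =
  fixes T :: "'a::cstar_algebra \<Rightarrow> 'a"
  assumes add: "T (x + y) = T x + T y"
    and scaleC: "T (scaleC c x) = scaleC c (T x)"
    and norm_eq: "norm (T x) = norm x"
begin

lemma bounded_linear: "bounded_linear T"
  by (rule bounded_linear_intro[where K=1]) (simp_all add: add norm_eq scaleC flip: scaleC_of_real)

lemma suminf: "summable f \<Longrightarrow> T (suminf f) = (\<Sum>n. T (f n))"
  using bounded_linear.suminf[OF bounded_linear] by metis

definition delta :: "'a \<Rightarrow> nat \<Rightarrow> 'a" where
  "delta x n = ((\<lambda>y. T y - y) ^^ n) x"

lemma delta_0 [simp]: "delta x 0 = x"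
  by (simp add: delta_def)

lemma delta_Suc: "delta x (Suc n) = T (delta x n) - delta x n"
  by (simp add: delta_def)

definition delta_series :: "'a \<Rightarrow> complex \<Rightarrow> 'a" where
  "delta_series x s = (\<Sum>n. scaleC (s ^ n) (delta x n))"

context
  fixes x :: 'a
  assumes delta_entire: "\<And>R. 0 \<le> R \<Longrightarrow> summable (\<lambda>n. R ^ n * norm (delta x n))"
begin

lemma summable_scaleC_delta:
  assumes c: "\<And>n. cmod (c n) \<le> K * r ^ n"
  shows "summable (\<lambda>n. scaleC (c n) (delta x (n + m)))"
proof -
  define \<rho> where "\<rho> = \<bar>r\<bar> + 1"
  have \<rho>: "\<rho> > 0" "r ^ n \<le> \<rho> ^ n" for n
  proof -
    have "r ^ n \<le> \<bar>r\<bar> ^ n" by (metis abs_ge_self power_abs)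
    also have "\<dots> \<le> \<rho> ^ n" unfolding \<rho>_def by (intro power_mono) auto
    finally show "r ^ n \<le> \<rho> ^ n" .
  qed (simp add: \<rho>_def)
  have K: "K \<ge> 0" using c[of 0] norm_ge_zero[of "c 0"] by (simp only: power_0 mult_1_right)
  have "summable (\<lambda>n. \<rho> ^ (n + m) * norm (delta x (n + m)))"
    using delta_entire[of \<rho>] \<rho> by (subst summable_iff_shift) simp
  hence "summable (\<lambda>n. \<rho> ^ (n + m) * norm (delta x (n + m)) / \<rho> ^ m)"
    by (rule summable_divide)
  hence "summable (\<lambda>n. K * (\<rho> ^ n * norm (delta x (n + m))))"
    using \<rho> by (intro summable_mult) (simp add: power_add)
  hence bound: "summable (\<lambda>n. K * \<rho> ^ n * norm (delta x (n + m)))"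
    by (simp add: mult.assoc)
  have "norm (scaleC (c n) (delta x (n + m))) \<le> K * \<rho> ^ n * norm (delta x (n + m))" for n
  proof -
    have "cmod (c n) \<le> K * \<rho> ^ n"
      using c[of n] mult_left_mono[OF \<rho>(2)[of n] K] by linarith
    thus ?thesis unfolding norm_scaleC by (rule mult_right_mono) simp
  qed
  thus ?thesis by (rule summable_comparison_test'[OF bound])
qed

lemma summable_delta_series: "summable (\<lambda>n. scaleC (s ^ n) (delta x n))"
  using summable_scaleC_delta[of "\<lambda>n. s ^ n" 1 "cmod s" 0] by (simp add: norm_power)

lemma delta_series_resolvent:
  "scaleC (1 + s) (delta_series x s) - scaleC s (T (delta_series x s)) = x"
proof -
  let ?f = "\<lambda>n. scaleC (s ^ n) (delta x n)"
  let ?g = "\<lambda>n. scaleC (s ^ n) (delta x (Suc n))"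
  have sg: "summable ?g"
    using summable_scaleC_delta[of "\<lambda>n. s ^ n" 1 "cmod s" 1] by (simp add: norm_power)
  have "T (delta_series x s) = (\<Sum>n. ?g n + ?f n)"
    unfolding delta_series_def suminf[OF summable_delta_series]
    by (intro suminf_cong) (simp add: delta_Suc scaleC scaleC_add_right[symmetric])
  also have "\<dots> = suminf ?g + delta_series x s"
    unfolding delta_series_def by (rule suminf_add[symmetric, OF sg summable_delta_series])
  finally have T_eq: "T (delta_series x s) = suminf ?g + delta_series x s" .
  have "scaleC s (suminf ?g) = (\<Sum>n. ?f (Suc n))"
    unfolding scaleC_suminf[OF sg] by (intro suminf_cong) (simp add: scaleC_mult[symmetric])
  also have "\<dots> = delta_series x s - x"
    unfolding delta_series_def
    by (subst suminf_split_head[OF summable_delta_series]) (simp add: scaleC_one)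
  finally show ?thesis
    by (simp add: T_eq scaleC_add_left scaleC_add_right scaleC_one)
qed

lemma norm_delta_series_le:
  "cmod (1 + s + cnj s) * norm (delta_series x s) \<le> (cmod (1 + s) + cmod s) * norm x"
proof -
  define N where "N = norm (delta_series x s)"
  have TN: "norm (T (delta_series x s)) = N" by (simp add: N_def norm_eq)
  have "cmod (1 + s) * N = norm (x + scaleC s (T (delta_series x s)))"
    using delta_series_resolvent[of s] by (simp add: N_def norm_scaleC[symmetric] algebra_simps)
  hence "cmod (1 + s) * N \<le> norm x + cmod s * N"
    using norm_triangle_ineq[of x "scaleC s (T (delta_series x s))"] by (simp add: TN norm_scaleC)
  moreover have "cmod s * N = norm (scaleC (1 + s) (delta_series x s) - x)"
    using delta_series_resolvent[of s] TN by (simp add: norm_scaleC algebra_simps)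
  hence "cmod s * N \<le> cmod (1 + s) * N + norm x"
    using norm_triangle_ineq4[of "scaleC (1 + s) (delta_series x s)" x] by (simp add: N_def norm_scaleC)
  ultimately have "\<bar>cmod (1 + s) - cmod s\<bar> * N \<le> norm x"
    by (auto simp: abs_if algebra_simps)
  hence "(cmod (1 + s) + cmod s) * (\<bar>cmod (1 + s) - cmod s\<bar> * N) \<le> (cmod (1 + s) + cmod s) * norm x"
    by (rule mult_left_mono) simp
  thus ?thesis by (simp add: cmod_one_plus_cnj N_def mult.assoc)
qed

lemma delta_series_sum:
  "(\<Sum>j\<in>J. scaleC (u j) (delta_series x (s j))) = (\<Sum>n. scaleC (\<Sum>j\<in>J. u j * s j ^ n) (delta x n))"
proof -
  have "summable (\<lambda>n. scaleC (u j * s j ^ n) (delta x n))" for j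
    using summable_scaleC_delta[of "\<lambda>n. u j * s j ^ n" "cmod (u j)" "cmod (s j)" 0]
    by (simp add: norm_mult norm_power)
  moreover have "(\<Sum>j\<in>J. scaleC (u j) (delta_series x (s j))) = (\<Sum>j\<in>J. \<Sum>n. scaleC (u j * s j ^ n) (delta x n))"
    unfolding delta_series_def
    by (intro sum.cong refl) (simp add: scaleC_suminf[OF summable_delta_series] scaleC_mult)
  ultimately show ?thesis by (simp add: scaleC_sum_left suminf_sum)
qed

lemma root_average_delta_series:
  fixes R :: real
  assumes k: "2 \<le> k" and M: "M = k + 1"
  defines "s j \<equiv> of_real R * unity_root M ^ j"
  shows "(\<Sum>j<M. scaleC (1 + s j + cnj (s j)) (delta_series x (s j)))
    = scaleC (of_nat M) (x + scaleC (of_real (R\<^sup>2)) (delta x 1))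
      + (\<Sum>n. scaleC (\<Sum>j<M. (1 + s j + cnj (s j)) * s j ^ (n + k)) (delta x (n + k)))"
proof -
  define c where "c n = (\<Sum>j<M. (1 + s j + cnj (s j)) * s j ^ n)" for n
  have "cmod (c n) \<le> M * (1 + 2 * \<bar>R\<bar>) * \<bar>R\<bar> ^ n" for n
    using norm_sum_circle_le[of "{..<M}" s "\<bar>R\<bar>" n]
    by (simp add: c_def s_def norm_mult norm_power mult.assoc)
  hence summable: "summable (\<lambda>n. scaleC (c n) (delta x n))"
    using summable_scaleC_delta[of c "M * (1 + 2 * \<bar>R\<bar>)" "\<bar>R\<bar>" 0] by simp
  have c: "c n = (if n = 0 then of_nat M else if n = 1 then of_nat M * of_real (R\<^sup>2) else 0)"
    if "n < k" for n
    unfolding c_def s_def using root_average_coeff[OF k M that] .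
  have "(\<Sum>n<k. scaleC (c n) (delta x n))
      = (\<Sum>n<k. (if n = 0 then scaleC (of_nat M) x else 0)
               + (if n = 1 then scaleC (of_nat M * of_real (R\<^sup>2)) (delta x 1) else 0))"
    by (intro sum.cong refl) (simp add: c)
  also have "\<dots> = scaleC (of_nat M) (x + scaleC (of_real (R\<^sup>2)) (delta x 1))"
    using k by (simp add: sum.distrib scaleC_add_right scaleC_mult)
  finally have head: "(\<Sum>n<k. scaleC (c n) (delta x n))
      = scaleC (of_nat M) (x + scaleC (of_real (R\<^sup>2)) (delta x 1))" .
  have "(\<Sum>j<M. scaleC (1 + s j + cnj (s j)) (delta_series x (s j))) = (\<Sum>n. scaleC (c n) (delta x n))"
    unfolding c_def by (rule delta_series_sum)
  also have "\<dots> = (\<Sum>n<k. scaleC (c n) (delta x n)) + (\<Sum>n. scaleC (c (n + k)) (delta x (n + k)))"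
    using suminf_split_initial_segment[OF summable, of k] by simp
  finally show ?thesis by (simp only: c_def head[unfolded c_def])
qed

lemma delta_1_bound:
  assumes R: "0 \<le> R"
  shows "norm (x + scaleC (of_real (R\<^sup>2)) (delta x 1)) \<le> (1 + 2 * R) * (norm x + 1)"
proof -
  define f where "f n = R ^ n * norm (delta x n)" for n
  have "summable f" using delta_entire[OF R] by (simp add: f_def[abs_def])
  then obtain N where N: "\<And>n. N \<le> n \<Longrightarrow> norm (\<Sum>i. f (i + n)) < 1"
    using suminf_exist_split[of 1 f] by auto
  define k where "k = N + 2"
  define M where "M = k + 1"
  define s where "s j = of_real R * unity_root M ^ j" for j
  define c where "c n = (\<Sum>j<M. (1 + s j + cnj (s j)) * s j ^ n)" for n
  have "2 \<le> k" "N \<le> k" "0 < M" by (simp_all add: M_def k_def)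
  have norm_s: "cmod (s j) = R" for j using R by (simp add: s_def norm_mult norm_power)
  have "norm (scaleC (1 + s j + cnj (s j)) (delta_series x (s j))) \<le> (1 + 2 * R) * norm x" for j
  proof -
    have "cmod (1 + s j) + cmod (s j) \<le> 1 + 2 * R"
      using norm_triangle_ineq[of 1 "s j"] norm_s[of j] by simp
    hence "(cmod (1 + s j) + cmod (s j)) * norm x \<le> (1 + 2 * R) * norm x"
      by (rule mult_right_mono) simp
    thus ?thesis
      using norm_delta_series_le[of "s j"] by (simp add: norm_scaleC)
  qed
  hence "norm (\<Sum>j<M. scaleC (1 + s j + cnj (s j)) (delta_series x (s j)))
      \<le> card {..<M} * ((1 + 2 * R) * norm x)"
    by (intro order_trans[OF norm_sum sum_bounded_above])
  hence average: "norm (\<Sum>j<M. scaleC (1 + s j + cnj (s j)) (delta_series x (s j)))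
      \<le> M * ((1 + 2 * R) * norm x)" by simp
  have sf: "summable (\<lambda>n. f (n + k))"
    using \<open>summable f\<close> by (subst summable_iff_shift)
  have "norm (scaleC (c n) (delta x n)) \<le> M * (1 + 2 * R) * f n" for n
  proof -
    have "cmod (c n) \<le> M * (1 + 2 * R) * R ^ n"
      using norm_sum_circle_le[of "{..<M}" s R n] norm_s by (simp add: c_def mult.assoc)
    thus ?thesis
      unfolding norm_scaleC f_def mult.assoc[symmetric] by (rule mult_right_mono) simp
  qed
  hence "norm (\<Sum>n. scaleC (c (n + k)) (delta x (n + k))) \<le> (\<Sum>n. M * (1 + 2 * R) * f (n + k))"
    by (intro norm_suminf_le summable_mult sf)
  also have "\<dots> = M * (1 + 2 * R) * (\<Sum>n. f (n + k))"
    by (rule suminf_mult[OF sf])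
  also have "\<dots> \<le> M * (1 + 2 * R) * 1"
    using N[OF \<open>N \<le> k\<close>] R by (intro mult_left_mono) auto
  finally have tail: "norm (\<Sum>n. scaleC (c (n + k)) (delta x (n + k))) \<le> M * (1 + 2 * R)"
    by simp
  have eq: "scaleC (of_nat M) (x + scaleC (of_real (R\<^sup>2)) (delta x 1))
      = (\<Sum>j<M. scaleC (1 + s j + cnj (s j)) (delta_series x (s j)))
        - (\<Sum>n. scaleC (c (n + k)) (delta x (n + k)))"
    using root_average_delta_series[OF \<open>2 \<le> k\<close> M_def, of R] by (simp add: s_def c_def)
  have "M * norm (x + scaleC (of_real (R\<^sup>2)) (delta x 1))
      = norm (scaleC (of_nat M) (x + scaleC (of_real (R\<^sup>2)) (delta x 1)))"
    by (simp add: norm_scaleC)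
  also have "\<dots> \<le> norm (\<Sum>j<M. scaleC (1 + s j + cnj (s j)) (delta_series x (s j)))
        + norm (\<Sum>n. scaleC (c (n + k)) (delta x (n + k)))"
    unfolding eq by (rule norm_triangle_ineq4)
  also have "\<dots> \<le> M * ((1 + 2 * R) * norm x) + M * (1 + 2 * R)"
    using average tail by (rule add_mono)
  also have "\<dots> = M * ((1 + 2 * R) * (norm x + 1))"
    by (simp add: algebra_simps)
  finally show ?thesis using \<open>0 < M\<close> by simp
qed

lemma delta_1_eq_0: "delta x 1 = 0"
proof (rule ccontr)
  assume "delta x 1 \<noteq> 0"
  define V where "V = norm (delta x 1)"
  define K where "K = norm x + 1"
  define R where "R = 4 * K / V + 1"
  have V: "V > 0" using \<open>delta x 1 \<noteq> 0\<close> by (simp add: V_def)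
  have K: "K > 0" by (simp add: K_def add_nonneg_pos)
  have R: "R \<ge> 1" using V K by (simp add: R_def)
  have "R\<^sup>2 * V \<le> norm (x + scaleC (of_real (R\<^sup>2)) (delta x 1)) + norm x"
    using norm_triangle_ineq4[of "x + scaleC (of_real (R\<^sup>2)) (delta x 1)" x]
    by (simp add: V_def norm_scaleC norm_power)
  also have "\<dots> \<le> (1 + 2 * R) * K + K"
    using delta_1_bound[of R] R by (simp add: K_def)
  also have "\<dots> \<le> 4 * K * R"
    using R K by (simp add: algebra_simps)
  finally have "R * (R * V) \<le> R * (4 * K)"
    by (simp add: power2_eq_square algebra_simps)
  hence "R * V \<le> 4 * K"
    using R by simp
  moreover have "R * V = 4 * K + V"
    using V by (simp add: R_def field_simps)
  ultimately show False using V by simp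
qed

lemma fixed_point: "T x = x"
  using delta_1_eq_0 delta_Suc[of x 0] by simp

end

end

lemma norm_unitary: "unitary u \<Longrightarrow> norm u = 1"
  using cstar_identity[of u] norm_ge_zero[of u] by (auto simp: unitary_def power2_eq_1_iff)

lemma unitary_invol: "unitary u \<Longrightarrow> unitary (invol u)"
  by (simp add: unitary_def invol_invol)

lemma norm_unitary_power_le: "unitary u \<Longrightarrow> norm (u ^ n) \<le> 1"
  by (metis norm_power_ineq norm_unitary power_one)

lemma complex_isometry_sandwich:
  assumes a: "unitary a" and b: "unitary b"
  shows "complex_isometry (\<lambda>y. a * y * invol b)"
proof
  show "a * (x + y) * invol b = a * x * invol b + a * y * invol b" for x y
    by (simp add: algebra_simps)
  show "a * scaleC c x * invol b = scaleC c (a * x * invol b)" for c x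
    by (simp flip: scaleC_mult_left scaleC_mult_right)
  show "norm (a * x * invol b) = norm x" for x
  proof (rule antisym)
    show "norm (a * x * invol b) \<le> norm x"
      using norm_mult_ineq[of "a * x" "invol b"] norm_mult_ineq[of a x]
        norm_unitary[OF a] norm_unitary[OF unitary_invol[OF b]] by simp
    have "x = invol a * (a * x * invol b) * b"
      using a b by (simp add: unitary_def mult.assoc[symmetric]) (simp add: mult.assoc)
    hence "norm x \<le> norm (invol a) * norm (a * x * invol b) * norm b"
      by (metis norm_mult_ineq mult_right_mono norm_ge_zero order_trans)
    thus "norm x \<le> norm (a * x * invol b)"
      using norm_unitary[OF b] norm_unitary[OF unitary_invol[OF a]] by simp
  qed
qed

lemma Cab_0: "Cab a b 0 = 1"
  by (simp add: Cab_def)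

lemma Cab_Suc: "Cab a b (Suc n) = a * Cab a b n - Cab a b n * b"
proof -
  define c where "c m k = (-1) ^ k * real (m choose k)" for m k
  define X where "X k = a ^ (Suc n - k) * b ^ k" for k
  have Cab_eq: "Cab a b m = (\<Sum>k\<le>m. c m k *\<^sub>R (a ^ (m - k) * b ^ k))" for m
    unfolding Cab_def c_def by (intro sum.cong refl) (simp add: scaleR_conv_of_real mult.assoc)
  have c_Suc: "c (Suc m) (Suc k) = c m (Suc k) - c m k" for m k
    by (simp add: c_def algebra_simps)
  have "Cab a b (Suc n) = c (Suc n) 0 *\<^sub>R X 0 + (\<Sum>k\<le>n. c (Suc n) (Suc k) *\<^sub>R X (Suc k))"
    unfolding Cab_eq X_def by (subst sum.atMost_Suc_shift) simp
  also have "(\<Sum>k\<le>n. c (Suc n) (Suc k) *\<^sub>R X (Suc k))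
      = (\<Sum>k\<le>n. c n (Suc k) *\<^sub>R X (Suc k)) - (\<Sum>k\<le>n. c n k *\<^sub>R X (Suc k))"
    by (simp only: c_Suc scaleR_diff_left sum_subtractf)
  also have "c (Suc n) 0 = c n 0"
    by (simp add: c_def)
  also have "c n 0 *\<^sub>R X 0 + ((\<Sum>k\<le>n. c n (Suc k) *\<^sub>R X (Suc k)) - (\<Sum>k\<le>n. c n k *\<^sub>R X (Suc k)))
      = (c n 0 *\<^sub>R X 0 + (\<Sum>k\<le>n. c n (Suc k) *\<^sub>R X (Suc k))) - (\<Sum>k\<le>n. c n k *\<^sub>R X (Suc k))"
    by simp
  also have "c n 0 *\<^sub>R X 0 + (\<Sum>k\<le>n. c n (Suc k) *\<^sub>R X (Suc k)) = (\<Sum>k\<le>n. c n k *\<^sub>R X k)"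
    by (subst sum.atMost_Suc_shift[symmetric]) (simp add: c_def)
  also have "\<dots> = a * Cab a b n"
    unfolding Cab_eq sum_distrib_left X_def
    by (intro sum.cong refl) (simp add: Suc_diff_le mult.assoc)
  also have "(\<Sum>k\<le>n. c n k *\<^sub>R X (Suc k)) = Cab a b n * b"
    unfolding Cab_eq sum_distrib_right X_def
    by (intro sum.cong refl) (simp add: mult.assoc power_commutes)
  finally show ?thesis .
qed

lemma Cab_self: "Cab b b (Suc n) = 0"
  by (induction n) (simp_all add: Cab_Suc Cab_0)

lemma summable_of_limsup_root_eq_0:
  fixes u :: "nat \<Rightarrow> real"
  assumes lim: "limsup (\<lambda>n. ereal (root n (u n))) = 0"
    and u: "\<And>n. 0 \<le> u n" and R: "0 \<le> R"
  shows "summable (\<lambda>n. R ^ n * u n)"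
proof (rule summable_comparison_test_ev[where g="\<lambda>n. (1/2) ^ n"])
  define q where "q = 1 / (2 * (R + 1))"
  have q: "q > 0" "R * q \<le> 1/2" using R by (auto simp: q_def field_simps)
  have "eventually (\<lambda>n. ereal (root n (u n)) < ereal q) sequentially"
    by (rule Limsup_lessD) (use lim q in simp)
  hence "eventually (\<lambda>n. root n (u n) < q \<and> n > 0) sequentially"
    using eventually_gt_at_top[of 0] by eventually_elim auto
  thus "eventually (\<lambda>n. norm (R ^ n * u n) \<le> (1/2) ^ n) sequentially"
  proof eventually_elim
    case (elim n)
    have "u n = root n (u n) ^ n" using elim u[of n] by simp
    also have "\<dots> \<le> q ^ n" using elim u[of n] by (intro power_mono) auto
    finally have "R ^ n * u n \<le> (R * q) ^ n"
      using R by (simp add: power_mult_distrib mult_left_mono)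
    also have "\<dots> \<le> (1/2) ^ n" using q R by (intro power_mono) auto
    finally show ?case using R u[of n] by simp
  qed
qed simp

lemma sandwich_delta_one:
  assumes "unitary a" "unitary b"
  shows "complex_isometry.delta (\<lambda>y. a * y * invol b) 1 n = Cab a b n * invol b ^ n"
proof -
  interpret complex_isometry "\<lambda>y. a * y * invol b"
    by (rule complex_isometry_sandwich[OF assms])
  have bb: "b * invol b = 1" using assms(2) by (simp add: unitary_def)
  show ?thesis
  proof (induction n)
    case (Suc n)
    let ?C = "Cab a b n"
    have "Cab a b (Suc n) * invol b ^ Suc n = a * ?C * invol b ^ Suc n - ?C * b * invol b ^ Suc n"
      by (simp only: Cab_Suc left_diff_distrib)
    also have "a * ?C * invol b ^ Suc n = a * (?C * invol b ^ n) * invol b"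
      by (simp only: power_Suc2 mult.assoc)
    also have "?C * b * invol b ^ Suc n = ?C * invol b ^ n"
      by (simp only: power_Suc mult.assoc) (simp add: mult.assoc[symmetric] bb)
    finally show ?case
      by (simp add: delta_Suc Suc.IH)
  qed (simp add: Cab_0)
qed

lemma sandwich_delta_entire:
  assumes a: "unitary a" and b: "unitary b" and rho: "rho a b = 0" and R: "0 \<le> R"
  shows "summable (\<lambda>n. R ^ n * norm (complex_isometry.delta (\<lambda>y. a * y * invol b) 1 n))"
proof (rule summable_comparison_test'[OF summable_of_limsup_root_eq_0])
  show "limsup (\<lambda>n. ereal (root n (norm (Cab a b n)))) = 0"
    using rho by (simp add: rho_def)
  fix n
  have "norm (complex_isometry.delta (\<lambda>y. a * y * invol b) 1 n) \<le> norm (Cab a b n) * norm (invol b ^ n)"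
    unfolding sandwich_delta_one[OF a b] by (rule norm_mult_ineq)
  also have "\<dots> \<le> norm (Cab a b n)"
    using norm_unitary_power_le[OF unitary_invol[OF b], of n] by (simp add: mult_left_le)
  finally show "norm (R ^ n * norm (complex_isometry.delta (\<lambda>y. a * y * invol b) 1 n))
      \<le> R ^ n * norm (Cab a b n)"
    using R by (simp add: mult_left_mono)
qed (use R in auto)

theorem corollary3p2:
  fixes a b :: "'a::cstar_algebra"
  assumes "unitary a" and "unitary b"
  shows "a = b \<longleftrightarrow> rho a b = 0"
proof
  assume "a = b"
  have "root n (norm (Cab b b n)) = 0" for n
    by (cases n) (simp_all add: Cab_self)
  hence "(\<lambda>n. ereal (root n (norm (Cab a b n)))) = (\<lambda>n. 0)"
    by (simp add: \<open>a = b\<close> zero_ereal_def)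
  thus "rho a b = 0" by (simp add: rho_def Limsup_const)
next
  assume rho: "rho a b = 0"
  interpret complex_isometry "\<lambda>y. a * y * invol b"
    by (rule complex_isometry_sandwich[OF assms])
  have "a * 1 * invol b = 1"
    using fixed_point sandwich_delta_entire[OF assms rho] by blast
  have "a = a * (invol b * b)" using assms(2) by (simp add: unitary_def)
  also have "\<dots> = b" using \<open>a * 1 * invol b = 1\<close> by (simp add: mult.assoc[symmetric])
  finally show "a = b" .
qed

end
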